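(* Let $\Sigma\subseteq\mathcal L_{\Diamond\forall}$ be finite and closed under subformulas, let $\Lambda={\sf ITL}^0_{\Diamond\forall}$, let $(W_c,\preccurlyeq_c,S_c)$ be the canonical model of $\Lambda$, and let $\Pi=(\Pi^+,\Pi^-)$ be a universal $\Sigma$-profile. Let $W_c[\Pi]=\{\Phi\in W_c:\Pi^+\subseteq\Phi^+\text{ and }\Pi^-\subseteq\Phi^-\}$. Then $W_c[\Pi]$ is upward closed under $\preccurlyeq_c$, and $W_c[\Pi]$ is honest as a $\Sigma$-labelled structure: for every $\Phi\in W_c[\Pi]$ and every $\forall\varphi\in\Sigma$, if $\forall\varphi\in\Phi^+$ then $\varphi\in\Psi^+$ for every $\Psi\in W_c[\Pi]$, and if $\forall\varphi\in\Phi^-$ then $\varphi\in\Psi^-$ for some $\Psi\in W_c[\Pi]$.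
   Context: $\mathcal L_{\Diamond\forall}$: formulas $\varphi::=\bot\mid p\mid\varphi\wedge\varphi\mid\varphi\vee\varphi\mid\varphi\to\varphi\mid\circ\varphi\mid\Diamond\varphi\mid\forall\varphi$; $\neg\varphi:=\varphi\to\bot$, $\varphi\leftrightarrow\psi:=(\varphi\to\psi)\wedge(\psi\to\varphi)$. ${\sf ITL}^0_{\Diamond\forall}$ is the least set of $\mathcal L_{\Diamond\forall}$-formulas containing all substitution instances of the intuitionistic propositional axioms and of $\neg\circ\bot$, $\circ\varphi\wedge\circ\psi\to\circ(\varphi\wedge\psi)$, $\circ(\varphi\vee\psi)\to\circ\varphi\vee\circ\psi$, $\circ(\varphi\to\psi)\to(\circ\varphi\to\circ\psi)$, $\varphi\vee\circ\Diamond\varphi\to\Diamond\varphi$, $\forall\varphi\vee\neg\forall\varphi$, $\forall(\varphi\to\psi)\to(\forall\varphi\to\forall\psi)$, $\forall(\varphi\vee\forall\psi)\to\forall\varphi\vee\forall\psi$, $\forall\varphi\to\varphi$, $\forall\varphi\to\forall\forall\varphi$, $\forall\varphi\leftrightarrow\circ\forall\varphi$, closed under modus ponens, from $\varphi$ infer $\circ\varphi$, from $\varphi\to\psi$ infer $\Diamond\varphi\to\Diamond\psi$, from $\circ\varphi\to\varphi$ infer $\Diamond\varphi\to\varphi$, and from $\varphi$ infer $\forall\varphi$. $\Gamma\vdash\Delta$ means there are finite $\Gamma'\subseteq\Gamma$, $\Delta'\subseteq\Delta$ with $\bigwedge\Gamma'\to\bigvee\Delta'\in\Lambda$. A prime type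 is a pair $(\Phi^+,\Phi^-)$ of sets of $\mathcal L_{\Diamond\forall}$-formulas with $\Phi^+\cup\Phi^-=\mathcal L_{\Diamond\forall}$ and $\Phi^+\not\vdash\Phi^-$. Canonical model: $W_c$ is the set of prime types; $\Phi\preccurlyeq_c\Psi$ iff $\Phi^+\subseteq\Psi^+$ and $\Psi^-\subseteq\Phi^-$; $\Phi\mathrel{S_c}\Psi$ iff $(\Phi,\Psi)$ is sensible ($\circ\varphi\in\Phi^\pm\Rightarrow\varphi\in\Psi^\pm$; $\Diamond\varphi\in\Phi^+\Rightarrow\varphi\in\Phi^+$ or $\Diamond\varphi\in\Psi^+$; $\Diamond\varphi\in\Phi^-\Rightarrow\Diamond\varphi\in\Psi^-$; $\forall\varphi\in\Phi^\pm\Leftrightarrow\forall\varphi\in\Psi^\pm$). $\Sigma_\forall$ denotes the set of formulas in $\Sigma$ of the form $\forall\varphi$; a universal $\Sigma$-profile is a partition $(\Pi^+,\Pi^-)$ of $\Sigma_\forall$. *)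

theory Defs
  imports Main
begin

datatype fm =
    Bot
  | Var nat
  | And fm fm
  | Or fm fm
  | Imp fm fm
  | Nxt fm
  | Dia fm
  | All fm

definition Neg :: "fm \<Rightarrow> fm" where "Neg \<phi> = Imp \<phi> Bot"
definition Iff :: "fm \<Rightarrow> fm \<Rightarrow> fm" where "Iff \<phi> \<psi> = And (Imp \<phi> \<psi>) (Imp \<psi> \<phi>)"
definition Top :: fm where "Top = Imp Bot Bot"

fun subformulas :: "fm \<Rightarrow> fm set" where
  "subformulas Bot = {Bot}"
| "subformulas (Var p) = {Var p}"
| "subformulas (And a b) = insert (And a b) (subformulas a \<union> subformulas b)"
| "subformulas (Or a b) = insert (Or a b) (subformulas a \<union> subformulas b)"
| "subformulas (Imp a b) = insert (Imp a b) (subformulas a \<union> subformulas b)"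
| "subformulas (Nxt a) = insert (Nxt a) (subformulas a)"
| "subformulas (Dia a) = insert (Dia a) (subformulas a)"
| "subformulas (All a) = insert (All a) (subformulas a)"

definition subformula_closed :: "fm set \<Rightarrow> bool" where
  "subformula_closed \<Sigma> \<longleftrightarrow> (\<forall>\<phi>\<in>\<Sigma>. subformulas \<phi> \<subseteq> \<Sigma>)"

inductive_set ITL0 :: "fm set" where
  ax_K:    "Imp \<phi> (Imp \<psi> \<phi>) \<in> ITL0"
| ax_S:    "Imp (Imp \<phi> (Imp \<psi> \<chi>)) (Imp (Imp \<phi> \<psi>) (Imp \<phi> \<chi>)) \<in> ITL0"
| ax_and1: "Imp (And \<phi> \<psi>) \<phi> \<in> ITL0"
| ax_and2: "Imp (And \<phi> \<psi>) \<psi> \<in> ITL0"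
| ax_andI: "Imp \<phi> (Imp \<psi> (And \<phi> \<psi>)) \<in> ITL0"
| ax_or1:  "Imp \<phi> (Or \<phi> \<psi>) \<in> ITL0"
| ax_or2:  "Imp \<psi> (Or \<phi> \<psi>) \<in> ITL0"
| ax_orE:  "Imp (Imp \<phi> \<chi>) (Imp (Imp \<psi> \<chi>) (Imp (Or \<phi> \<psi>) \<chi>)) \<in> ITL0"
| ax_efq:  "Imp Bot \<phi> \<in> ITL0"
| ax_nxt_bot: "Neg (Nxt Bot) \<in> ITL0"
| ax_nxt_and: "Imp (And (Nxt \<phi>) (Nxt \<psi>)) (Nxt (And \<phi> \<psi>)) \<in> ITL0"
| ax_nxt_or:  "Imp (Nxt (Or \<phi> \<psi>)) (Or (Nxt \<phi>) (Nxt \<psi>)) \<in> ITL0"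
| ax_nxt_imp: "Imp (Nxt (Imp \<phi> \<psi>)) (Imp (Nxt \<phi>) (Nxt \<psi>)) \<in> ITL0"
| ax_dia_fix: "Imp (Or \<phi> (Nxt (Dia \<phi>))) (Dia \<phi>) \<in> ITL0"
| ax_all_lem: "Or (All \<phi>) (Neg (All \<phi>)) \<in> ITL0"
| ax_all_K:   "Imp (All (Imp \<phi> \<psi>)) (Imp (All \<phi>) (All \<psi>)) \<in> ITL0"
| ax_all_or:  "Imp (All (Or \<phi> (All \<psi>))) (Or (All \<phi>) (All \<psi>)) \<in> ITL0"
| ax_all_T:   "Imp (All \<phi>) \<phi> \<in> ITL0"
| ax_all_4:   "Imp (All \<phi>) (All (All \<phi>)) \<in> ITL0"
| ax_all_nxt: "Iff (All \<phi>) (Nxt (All \<phi>)) \<in> ITL0"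
| mp:        "\<phi> \<in> ITL0 \<Longrightarrow> Imp \<phi> \<psi> \<in> ITL0 \<Longrightarrow> \<psi> \<in> ITL0"
| nec_nxt:   "\<phi> \<in> ITL0 \<Longrightarrow> Nxt \<phi> \<in> ITL0"
| mono_dia:  "Imp \<phi> \<psi> \<in> ITL0 \<Longrightarrow> Imp (Dia \<phi>) (Dia \<psi>) \<in> ITL0"
| ind_dia:   "Imp (Nxt \<phi>) \<phi> \<in> ITL0 \<Longrightarrow> Imp (Dia \<phi>) \<phi> \<in> ITL0"
| nec_all:   "\<phi> \<in> ITL0 \<Longrightarrow> All \<phi> \<in> ITL0"

definition Conj :: "fm list \<Rightarrow> fm" where "Conj xs = foldr And xs Top"
definition Disj :: "fm list \<Rightarrow> fm" where "Disj xs = foldr Or xs Bot"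

definition derives :: "fm set \<Rightarrow> fm set \<Rightarrow> bool" where
  "derives \<Gamma> \<Delta> \<longleftrightarrow>
     (\<exists>gs ds. set gs \<subseteq> \<Gamma> \<and> set ds \<subseteq> \<Delta> \<and> Imp (Conj gs) (Disj ds) \<in> ITL0)"

type_synonym ptype = "fm set \<times> fm set"

definition prime_type :: "ptype \<Rightarrow> bool" where
  "prime_type \<Phi> \<longleftrightarrow> fst \<Phi> \<union> snd \<Phi> = UNIV \<and> \<not> derives (fst \<Phi>) (snd \<Phi>)"

definition Wc :: "ptype set" where "Wc = {\<Phi>. prime_type \<Phi>}"

definition leq_c :: "ptype \<Rightarrow> ptype \<Rightarrow> bool" where
  "leq_c \<Phi> \<Psi> \<longleftrightarrow> fst \<Phi> \<subseteq> fst \<Psi> \<and> snd \<Psi> \<subseteq> snd \<Phi>"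

definition univ_part :: "fm set \<Rightarrow> fm set" where
  "univ_part \<Sigma> = {\<phi>\<in>\<Sigma>. \<exists>\<psi>. \<phi> = All \<psi>}"

definition universal_profile :: "fm set \<Rightarrow> ptype \<Rightarrow> bool" where
  "universal_profile \<Sigma> \<Pi> \<longleftrightarrow>
     fst \<Pi> \<union> snd \<Pi> = univ_part \<Sigma> \<and> fst \<Pi> \<inter> snd \<Pi> = {}"

definition Wc_restr :: "ptype \<Rightarrow> ptype set" where
  "Wc_restr \<Pi> = {\<Phi>\<in>Wc. fst \<Pi> \<subseteq> fst \<Phi> \<and> snd \<Pi> \<subseteq> snd \<Phi>}"

end

theory Submission
  imports Defs
begin

text \<open>Upward closure: a prime type decides every \<open>\<forall>\<phi>\<close> by the axiom \<open>\<forall>\<phi> \<or> \<not>\<forall>\<phi>\<close>, and a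
  negation \<open>\<not>\<forall>\<phi>\<close> on the left persists to all successors, so universal formulas cannot move
  from the right to the left side along \<open>\<preccurlyeq>\<^sub>c\<close>. Honesty for \<open>\<forall>\<phi>\<close> on the left is the axiom
  \<open>\<forall>\<phi> \<rightarrow> \<phi>\<close>. For \<open>\<forall>\<phi>\<close> on the right, the universal formulas of \<open>\<Phi>\<close> together with \<open>\<phi>\<close> on the
  right form an underivable sequent: a derivation of it could be boxed, since \<open>\<forall>\<close>-formulas
  entail their own \<open>\<forall>\<close>, and \<open>\<forall>(\<phi> \<or> \<forall>\<psi>) \<rightarrow> \<forall>\<phi> \<or> \<forall>\<psi>\<close> then yields a derivation of \<open>\<forall>\<phi>\<close>
  from \<open>\<Phi>\<close>. Lindenbaum's lemma extends this sequent to the required prime type \<open>\<Psi>\<close>.\<close>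

lemma ITL0_imp_refl: "Imp a a \<in> ITL0"
  by (rule mp[OF ax_K mp[OF ax_K ax_S]])

lemma ITL0_imp_const: "b \<in> ITL0 \<Longrightarrow> Imp a b \<in> ITL0"
  by (rule mp[OF _ ax_K])

lemma ITL0_imp_mp: "Imp h (Imp a b) \<in> ITL0 \<Longrightarrow> Imp h a \<in> ITL0 \<Longrightarrow> Imp h b \<in> ITL0"
  by (rule mp[OF _ mp[OF _ ax_S]])

lemma ITL0_imp_trans: "Imp a b \<in> ITL0 \<Longrightarrow> Imp b c \<in> ITL0 \<Longrightarrow> Imp a c \<in> ITL0"
  by (rule ITL0_imp_mp[OF ITL0_imp_const])

lemma ITL0_imp_conjI: "Imp h a \<in> ITL0 \<Longrightarrow> Imp h b \<in> ITL0 \<Longrightarrow> Imp h (And a b) \<in> ITL0"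
  by (rule ITL0_imp_mp[OF ITL0_imp_mp[OF ITL0_imp_const[OF ax_andI]]])

lemma ITL0_curry: "Imp (And h a) b \<in> ITL0 \<Longrightarrow> Imp h (Imp a b) \<in> ITL0"
  by (rule ITL0_imp_trans[OF ax_andI mp[OF ITL0_imp_const ax_S]])

lemma ITL0_disjE: "Imp a c \<in> ITL0 \<Longrightarrow> Imp b c \<in> ITL0 \<Longrightarrow> Imp (Or a b) c \<in> ITL0"
  by (rule mp[OF _ mp[OF _ ax_orE]])

lemma ITL0_imp_disjE:
  "Imp h (Or a b) \<in> ITL0 \<Longrightarrow> Imp (And h a) c \<in> ITL0 \<Longrightarrow> Imp (And h b) c \<in> ITL0
    \<Longrightarrow> Imp h c \<in> ITL0"
  by (rule ITL0_imp_mp[OF ITL0_imp_mp[OF ITL0_imp_mp[OF ITL0_imp_const[OF ax_orE]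
        ITL0_curry] ITL0_curry]])

lemma ITL0_Top: "Top \<in> ITL0"
  unfolding Top_def by (rule ITL0_imp_refl)

lemma ITL0_All_mono: "Imp a b \<in> ITL0 \<Longrightarrow> Imp (All a) (All b) \<in> ITL0"
  by (rule mp[OF nec_all ax_all_K])

lemma ITL0_All_conj: "Imp (And (All a) (All b)) (All (And a b)) \<in> ITL0"
proof -
  let ?h = "And (All a) (All b)"
  have "Imp ?h (All (Imp b (And a b))) \<in> ITL0"
    by (rule ITL0_imp_trans[OF ax_and1 ITL0_All_mono[OF ax_andI]])
  then show ?thesis
    by (rule ITL0_imp_mp[OF ITL0_imp_mp[OF ITL0_imp_const[OF ax_all_K]] ax_and2])
qed

lemma Conj_simps [simp]: "Conj [] = Top" "Conj (g # gs) = And g (Conj gs)"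
  by (simp_all add: Conj_def)

lemma Disj_simps [simp]: "Disj [] = Bot" "Disj (d # ds) = Or d (Disj ds)"
  by (simp_all add: Disj_def)

lemma ITL0_Conj_imp_mem: "a \<in> set gs \<Longrightarrow> Imp (Conj gs) a \<in> ITL0"
  by (induction gs) (auto intro: ax_and1 ITL0_imp_trans[OF ax_and2])

lemma ITL0_Conj_mono: "set gs \<subseteq> set gs' \<Longrightarrow> Imp (Conj gs') (Conj gs) \<in> ITL0"
  by (induction gs) (auto intro: ITL0_imp_const ITL0_Top ITL0_imp_conjI ITL0_Conj_imp_mem)

lemma ITL0_mem_imp_Disj: "a \<in> set ds \<Longrightarrow> Imp a (Disj ds) \<in> ITL0"
  by (induction ds) (auto intro: ax_or1 ITL0_imp_trans[OF _ ax_or2])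

lemma ITL0_Disj_mono: "set ds \<subseteq> set ds' \<Longrightarrow> Imp (Disj ds) (Disj ds') \<in> ITL0"
  by (induction ds) (auto intro: ax_efq ITL0_disjE ITL0_mem_imp_Disj)

definition provable :: "fm list \<Rightarrow> fm list \<Rightarrow> bool" where
  "provable gs ds \<longleftrightarrow> Imp (Conj gs) (Disj ds) \<in> ITL0"

lemma derives_iff_provable:
  "derives \<Gamma> \<Delta> \<longleftrightarrow> (\<exists>gs ds. set gs \<subseteq> \<Gamma> \<and> set ds \<subseteq> \<Delta> \<and> provable gs ds)"
  unfolding derives_def provable_def ..

lemma provable_mono:
  "provable gs ds \<Longrightarrow> set gs \<subseteq> set gs' \<Longrightarrow> set ds \<subseteq> set ds' \<Longrightarrow> provable gs' ds'"
  unfolding provable_def by (meson ITL0_Conj_mono ITL0_Disj_mono ITL0_imp_trans)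

lemma provable_cut: "provable (p # gs) ds \<Longrightarrow> provable gs (p # ds) \<Longrightarrow> provable gs ds"
  unfolding provable_def
  by (auto intro: ITL0_imp_disjE ITL0_imp_trans[OF ITL0_imp_conjI[OF ax_and2 ax_and1]] ax_and2)

lemma provable_imp: "Imp a b \<in> ITL0 \<Longrightarrow> provable [a] [b]"
  unfolding provable_def by (auto intro: ITL0_imp_trans[OF ax_and1] ITL0_imp_trans[OF _ ax_or1])

lemma provable_disj: "Or a b \<in> ITL0 \<Longrightarrow> provable [] [a, b]"
  unfolding provable_def
  by (auto intro: ITL0_imp_const mp[OF _ ITL0_disjE[OF ax_or1 ITL0_imp_trans[OF ax_or1 ax_or2]]])

lemma provable_Neg: "provable [a, Neg a] []"
  unfolding provable_def Neg_def
  by (auto intro: ITL0_imp_mp[OF ITL0_imp_trans[OF ax_and2 ax_and1] ax_and1])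

lemma derivesI: "provable gs ds \<Longrightarrow> set gs \<subseteq> \<Gamma> \<Longrightarrow> set ds \<subseteq> \<Delta> \<Longrightarrow> derives \<Gamma> \<Delta>"
  unfolding derives_iff_provable by blast

lemma derives_cut:
  assumes "derives (insert p \<Gamma>) \<Delta>" and "derives \<Gamma> (insert p \<Delta>)"
  shows "derives \<Gamma> \<Delta>"
proof -
  obtain gs1 ds1 where 1: "set gs1 \<subseteq> insert p \<Gamma>" "set ds1 \<subseteq> \<Delta>" "provable gs1 ds1"
    using assms(1) unfolding derives_iff_provable by blast
  obtain gs2 ds2 where 2: "set gs2 \<subseteq> \<Gamma>" "set ds2 \<subseteq> insert p \<Delta>" "provable gs2 ds2"
    using assms(2) unfolding derives_iff_provable by blast
  let ?gs = "filter (\<lambda>x. x \<noteq> p) gs1 @ gs2"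
  let ?ds = "ds1 @ filter (\<lambda>x. x \<noteq> p) ds2"
  have "provable (p # ?gs) ?ds" by (rule provable_mono[OF 1(3)]) auto
  moreover have "provable ?gs (p # ?ds)" by (rule provable_mono[OF 2(3)]) auto
  ultimately have "provable ?gs ?ds" by (rule provable_cut)
  moreover have "set ?gs \<subseteq> \<Gamma>" "set ?ds \<subseteq> \<Delta>" using 1 2 by auto
  ultimately show ?thesis by (rule derivesI)
qed

lemma lindenbaum:
  assumes "\<not> derives \<Gamma> \<Delta>"
  obtains \<Psi> where "prime_type \<Psi>" "\<Gamma> \<subseteq> fst \<Psi>" "\<Delta> \<subseteq> snd \<Psi>"
proof -
  \<comment> \<open>Zorn's lemma on sequents \<open>(\<Gamma>', \<Delta>')\<close> encoded as sets \<open>S\<close> with \<open>\<Gamma>' = Inl -` S\<close>, \<open>\<Delta>' = Inr -` S\<close>.\<close>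
  define A where "A = {S. \<Gamma> \<subseteq> Inl -` S \<and> \<Delta> \<subseteq> Inr -` S \<and> \<not> derives (Inl -` S) (Inr -` S)}"
  have "\<exists>M\<in>A. \<forall>X\<in>A. M \<subseteq> X \<longrightarrow> X = M"
  proof (rule subset_Zorn_nonempty)
    have "Inl -` (Inl ` \<Gamma> \<union> Inr ` \<Delta>) = \<Gamma>" "Inr -` (Inl ` \<Gamma> \<union> Inr ` \<Delta>) = \<Delta>" by auto
    then have "Inl ` \<Gamma> \<union> Inr ` \<Delta> \<in> A" using assms unfolding A_def by simp
    then show "A \<noteq> {}" by blast
  next
    fix C assume C: "C \<noteq> {}" "subset.chain A C"
    then have "C \<subseteq> A" by (simp add: subset.chain_def)
    have "\<not> derives (Inl -` \<Union>C) (Inr -` \<Union>C)"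
    proof
      assume "derives (Inl -` \<Union>C) (Inr -` \<Union>C)"
      then obtain gs ds where d: "set gs \<subseteq> Inl -` \<Union>C" "set ds \<subseteq> Inr -` \<Union>C" "provable gs ds"
        unfolding derives_iff_provable by blast
      then have "Inl ` set gs \<union> Inr ` set ds \<subseteq> \<Union>C" by blast
      with finite_set obtain B where B: "B \<in> C" "Inl ` set gs \<union> Inr ` set ds \<subseteq> B"
        by (metis finite_Un finite_imageI finite_subset_Union_chain[OF _ _ C])
      then have "derives (Inl -` B) (Inr -` B)"
        by (intro derivesI[OF d(3)]) blast+
      moreover have "B \<in> A" using B(1) \<open>C \<subseteq> A\<close> by blast
      ultimately show False unfolding A_def by blast
    qed
    moreover have "\<Gamma> \<subseteq> Inl -` \<Union>C" "\<Delta> \<subseteq> Inr -` \<Union>C"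
      using C(1) \<open>C \<subseteq> A\<close> unfolding A_def by blast+
    ultimately show "\<Union>C \<in> A" unfolding A_def by blast
  qed
  then obtain M where "M \<in> A" and M_max: "\<And>X. X \<in> A \<Longrightarrow> M \<subseteq> X \<Longrightarrow> X = M" by blast
  then have M: "\<Gamma> \<subseteq> Inl -` M" "\<Delta> \<subseteq> Inr -` M" "\<not> derives (Inl -` M) (Inr -` M)"
    unfolding A_def by auto
  have "x \<in> Inl -` M \<union> Inr -` M" for x
  proof (rule ccontr)
    assume x: "x \<notin> Inl -` M \<union> Inr -` M"
    have "derives (insert x (Inl -` M)) (Inr -` M)"
    proof (rule ccontr)
      assume "\<not> ?thesis"
      moreover have "Inl -` insert (Inl x) M = insert x (Inl -` M)" "Inr -` insert (Inl x) M = Inr -` M"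
        by auto
      ultimately have "insert (Inl x) M \<in> A" using M unfolding A_def by auto
      then show False using M_max[of "insert (Inl x) M"] x by (auto simp: vimage_def)
    qed
    moreover have "derives (Inl -` M) (insert x (Inr -` M))"
    proof (rule ccontr)
      assume "\<not> ?thesis"
      moreover have "Inl -` insert (Inr x) M = Inl -` M" "Inr -` insert (Inr x) M = insert x (Inr -` M)"
        by auto
      ultimately have "insert (Inr x) M \<in> A" using M unfolding A_def by auto
      then show False using M_max[of "insert (Inr x) M"] x by (auto simp: vimage_def)
    qed
    ultimately show False using derives_cut M(3) by blast
  qed
  then have "prime_type (Inl -` M, Inr -` M)" using M(3) unfolding prime_type_def by auto
  with M show thesis by (intro that) auto
qed

lemma prime_type_not_provable:
  "prime_type \<Phi> \<Longrightarrow> set gs \<subseteq> fst \<Phi> \<Longrightarrow> set ds \<subseteq> snd \<Phi> \<Longrightarrow> \<not> provable gs ds"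
  unfolding prime_type_def using derivesI by blast

lemma prime_type_provable:
  assumes "prime_type \<Phi>" and "provable gs ds" and "set gs \<subseteq> fst \<Phi>"
  shows "\<exists>d\<in>set ds. d \<in> fst \<Phi>"
proof (rule ccontr)
  assume "\<not> ?thesis"
  then have "set ds \<subseteq> snd \<Phi>" using assms(1) unfolding prime_type_def by blast
  then show False using assms prime_type_not_provable by blast
qed

lemma prime_type_snd_iff: "prime_type \<Phi> \<Longrightarrow> a \<in> snd \<Phi> \<longleftrightarrow> a \<notin> fst \<Phi>"
  using prime_type_not_provable[of \<Phi> "[a]" "[a]"] provable_imp[OF ITL0_imp_refl, of a]
  unfolding prime_type_def by auto

lemma prime_type_fst_imp: "prime_type \<Phi> \<Longrightarrow> Imp a b \<in> ITL0 \<Longrightarrow> a \<in> fst \<Phi> \<Longrightarrow> b \<in> fst \<Phi>"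
  using prime_type_provable[OF _ provable_imp] by fastforce

lemma prime_type_fst_disj: "prime_type \<Phi> \<Longrightarrow> Or a b \<in> ITL0 \<Longrightarrow> a \<in> fst \<Phi> \<or> b \<in> fst \<Phi>"
  using prime_type_provable[OF _ provable_disj] by fastforce

lemma prime_type_fst_Neg: "prime_type \<Phi> \<Longrightarrow> a \<in> fst \<Phi> \<Longrightarrow> Neg a \<notin> fst \<Phi>"
  using prime_type_provable[OF _ provable_Neg] by fastforce

lemma leq_c_All_snd:
  assumes "prime_type \<Phi>" "prime_type \<Psi>" "leq_c \<Phi> \<Psi>" "All \<phi> \<in> snd \<Phi>"
  shows "All \<phi> \<in> snd \<Psi>"
proof -
  have "Neg (All \<phi>) \<in> fst \<Phi>"
    using prime_type_fst_disj[OF assms(1) ax_all_lem] assms(1,4) prime_type_snd_iff by blast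
  then have "Neg (All \<phi>) \<in> fst \<Psi>" using assms(3) unfolding leq_c_def by blast
  then show ?thesis using assms(2) prime_type_fst_Neg prime_type_snd_iff by blast
qed

definition is_All :: "fm \<Rightarrow> bool" where
  "is_All \<phi> \<longleftrightarrow> (\<exists>\<psi>. \<phi> = All \<psi>)"

lemma ITL0_Disj_imp_All: "list_all is_All ds \<Longrightarrow> Imp (Disj ds) (All (Disj ds)) \<in> ITL0"
proof (induction ds)
  case Nil
  then show ?case by (simp add: ax_efq)
next
  case (Cons d ds)
  then obtain \<psi> where d: "d = All \<psi>" by (auto simp: is_All_def)
  have "Imp (All \<psi>) (All (Or (All \<psi>) (Disj ds))) \<in> ITL0"
    by (rule ITL0_imp_trans[OF ax_all_4 ITL0_All_mono[OF ax_or1]])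
  moreover have "Imp (Disj ds) (All (Or (All \<psi>) (Disj ds))) \<in> ITL0"
    using Cons by (intro ITL0_imp_trans[OF _ ITL0_All_mono[OF ax_or2]]) auto
  ultimately show ?case using d by (simp add: ITL0_disjE)
qed

lemma ITL0_Conj_imp_All: "list_all is_All gs \<Longrightarrow> Imp (Conj gs) (All (Conj gs)) \<in> ITL0"
proof (induction gs)
  case Nil
  then show ?case by (simp add: ITL0_imp_const nec_all ITL0_Top)
next
  case (Cons g gs)
  then obtain \<psi> where g: "g = All \<psi>" by (auto simp: is_All_def)
  let ?h = "And (All \<psi>) (Conj gs)"
  have "Imp ?h (All (All \<psi>)) \<in> ITL0" by (rule ITL0_imp_trans[OF ax_and1 ax_all_4])
  moreover have "Imp ?h (All (Conj gs)) \<in> ITL0" using Cons by (intro ITL0_imp_trans[OF ax_and2]) auto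
  ultimately have "Imp ?h (All ?h) \<in> ITL0" by (rule ITL0_imp_trans[OF ITL0_imp_conjI ITL0_All_conj])
  then show ?case using g by simp
qed

lemma provable_AllR:
  assumes "provable gs (p # ds)" and "list_all is_All gs" and "list_all is_All ds"
  shows "provable gs (All p # ds)"
proof -
  let ?G = "Conj gs" and ?D = "Disj ds"
  have "Imp ?G (Or p ?D) \<in> ITL0" using assms(1) by (simp add: provable_def)
  then have "Imp ?G (All (Or p ?D)) \<in> ITL0"
    by (rule ITL0_imp_trans[OF ITL0_Conj_imp_All[OF assms(2)] ITL0_All_mono])
  moreover have "Imp (Or p ?D) (Or p (All ?D)) \<in> ITL0"
    by (rule ITL0_disjE[OF ax_or1 ITL0_imp_trans[OF ITL0_Disj_imp_All[OF assms(3)] ax_or2]])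
  ultimately have "Imp ?G (Or (All p) (All ?D)) \<in> ITL0"
    by (rule ITL0_imp_trans[OF ITL0_imp_trans[OF _ ITL0_All_mono] ax_all_or])
  moreover have "Imp (Or (All p) (All ?D)) (Or (All p) ?D) \<in> ITL0"
    by (rule ITL0_disjE[OF ax_or1 ITL0_imp_trans[OF ax_all_T ax_or2]])
  ultimately have "Imp ?G (Or (All p) ?D) \<in> ITL0" by (rule ITL0_imp_trans)
  then show ?thesis by (simp add: provable_def)
qed

lemma prime_type_All_snd_witness:
  assumes "prime_type \<Phi>" and "All \<phi> \<in> snd \<Phi>"
  obtains \<Psi> where "prime_type \<Psi>" "{x \<in> fst \<Phi>. is_All x} \<subseteq> fst \<Psi>"
    "{x \<in> snd \<Phi>. is_All x} \<subseteq> snd \<Psi>" "\<phi> \<in> snd \<Psi>"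
proof -
  have "\<not> derives {x \<in> fst \<Phi>. is_All x} (insert \<phi> {x \<in> snd \<Phi>. is_All x})"
  proof
    assume "derives {x \<in> fst \<Phi>. is_All x} (insert \<phi> {x \<in> snd \<Phi>. is_All x})"
    then obtain gs ds where gs: "set gs \<subseteq> {x \<in> fst \<Phi>. is_All x}"
      and ds: "set ds \<subseteq> insert \<phi> {x \<in> snd \<Phi>. is_All x}" and "provable gs ds"
      unfolding derives_iff_provable by blast
    let ?ds = "filter (\<lambda>x. x \<noteq> \<phi>) ds"
    have "provable gs (\<phi> # ?ds)" by (rule provable_mono[OF \<open>provable gs ds\<close>]) auto
    then have "provable gs (All \<phi> # ?ds)"
      by (rule provable_AllR) (use gs ds in \<open>auto simp: list_all_iff\<close>)
    moreover have "set gs \<subseteq> fst \<Phi>" "set (All \<phi> # ?ds) \<subseteq> snd \<Phi>" using gs ds assms(2) by auto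
    ultimately show False using prime_type_not_provable assms(1) by blast
  qed
  then show thesis by (auto elim!: lindenbaum intro: that)
qed

lemma universal_profile_is_All: "universal_profile \<Sigma> \<Pi> \<Longrightarrow> x \<in> fst \<Pi> \<union> snd \<Pi> \<Longrightarrow> is_All x"
  unfolding universal_profile_def univ_part_def is_All_def by blast

lemma Wc_restr_All_fst_iff:
  assumes "universal_profile \<Sigma> \<Pi>" "\<Phi> \<in> Wc_restr \<Pi>" "All \<phi> \<in> \<Sigma>"
  shows "All \<phi> \<in> fst \<Phi> \<longleftrightarrow> All \<phi> \<in> fst \<Pi>"
  using assms prime_type_snd_iff
  unfolding universal_profile_def univ_part_def Wc_restr_def Wc_def by blast

theorem lemma9p3:
  fixes \<Sigma> :: "fm set" and \<Pi> :: ptype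
  assumes "finite \<Sigma>" and "subformula_closed \<Sigma>"
    and "universal_profile \<Sigma> \<Pi>"
  shows "(\<forall>\<Phi>\<in>Wc_restr \<Pi>. \<forall>\<Psi>\<in>Wc. leq_c \<Phi> \<Psi> \<longrightarrow> \<Psi> \<in> Wc_restr \<Pi>)
    \<and> (\<forall>\<Phi>\<in>Wc_restr \<Pi>. \<forall>\<phi>. All \<phi> \<in> \<Sigma> \<longrightarrow>
          (All \<phi> \<in> fst \<Phi> \<longrightarrow> (\<forall>\<Psi>\<in>Wc_restr \<Pi>. \<phi> \<in> fst \<Psi>))
        \<and> (All \<phi> \<in> snd \<Phi> \<longrightarrow> (\<exists>\<Psi>\<in>Wc_restr \<Pi>. \<phi> \<in> snd \<Psi>)))"
proof (intro conjI ballI allI impI)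
  fix \<Phi> \<Psi> assume \<Phi>: "\<Phi> \<in> Wc_restr \<Pi>" and \<Psi>: "\<Psi> \<in> Wc" and "leq_c \<Phi> \<Psi>"
  have "snd \<Pi> \<subseteq> snd \<Psi>"
  proof
    fix x assume "x \<in> snd \<Pi>"
    moreover from this obtain \<phi> where "x = All \<phi>"
      using universal_profile_is_All[OF assms(3)] unfolding is_All_def by blast
    ultimately show "x \<in> snd \<Psi>"
      using \<Phi> \<Psi> leq_c_All_snd[OF _ _ \<open>leq_c \<Phi> \<Psi>\<close>] unfolding Wc_restr_def Wc_def by blast
  qed
  then show "\<Psi> \<in> Wc_restr \<Pi>"
    using \<Phi> \<Psi> \<open>leq_c \<Phi> \<Psi>\<close> unfolding Wc_restr_def leq_c_def by auto
next
  fix \<Phi> \<phi> \<Psi> assume "\<Phi> \<in> Wc_restr \<Pi>" "All \<phi> \<in> \<Sigma>" "All \<phi> \<in> fst \<Phi>" "\<Psi> \<in> Wc_restr \<Pi>"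
  then have "All \<phi> \<in> fst \<Psi>" using Wc_restr_All_fst_iff[OF assms(3)] by blast
  then show "\<phi> \<in> fst \<Psi>"
    using prime_type_fst_imp[OF _ ax_all_T] \<open>\<Psi> \<in> Wc_restr \<Pi>\<close> unfolding Wc_restr_def Wc_def by blast
next
  fix \<Phi> \<phi> assume \<Phi>: "\<Phi> \<in> Wc_restr \<Pi>" and "All \<phi> \<in> snd \<Phi>"
  moreover from \<Phi> have "prime_type \<Phi>" by (simp add: Wc_restr_def Wc_def)
  ultimately obtain \<Psi> where \<Psi>: "prime_type \<Psi>" "{x \<in> fst \<Phi>. is_All x} \<subseteq> fst \<Psi>"
    "{x \<in> snd \<Phi>. is_All x} \<subseteq> snd \<Psi>" "\<phi> \<in> snd \<Psi>"
    using prime_type_All_snd_witness by blast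
  then have "\<Psi> \<in> Wc_restr \<Pi>"
    using \<Phi> universal_profile_is_All[OF assms(3)] unfolding Wc_restr_def Wc_def by blast
  then show "\<exists>\<Psi>\<in>Wc_restr \<Pi>. \<phi> \<in> snd \<Psi>" using \<Psi>(4) by blast
qed

end
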